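(* Let $0<\alpha<\delta$. Consider the birth–death continuous-time Markov chain on $\mathbb{Z}_{\ge0}$ in which, for $n\ge1$, $n\to n+1$ at rate $\alpha n$ and $n\to n-1$ at rate $\delta n$. For $n\ge1$ let $T_n$ be the first hitting time of $0$ starting from $n$. Then for all $n\ge1$, $$\frac{\ln(n+1)}{\delta}\le\mathbb{E}[T_n]\le\frac{1+\ln n}{\delta-\alpha}.$$ *)

theory Defs
  imports "HOL-Probability.Probability"
begin

text \<open>Explicit construction of the birth-death chain (rates: n to n+1 at alpha*n,
  n to n-1 at delta*n, 0 absorbing) via its jump chain and exponential holding times.
  A sample point omega assigns to each step k a pair (b_k, E_k) of independent random
  variables: b_k is a coin with P(True) = alpha/(alpha+delta) (True = birth), and
  E_k is Exp(1)-distributed; the holding time in state m > 0 is E_k / ((alpha+delta) m),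
  i.e. Exp((alpha+delta) m)-distributed.\<close>

definition bd_step :: "nat \<Rightarrow> bool \<Rightarrow> nat" where
  "bd_step m b = (if m = 0 then 0 else if b then m + 1 else m - 1)"

primrec bd_jump_chain :: "nat \<Rightarrow> (nat \<Rightarrow> bool \<times> real) \<Rightarrow> nat \<Rightarrow> nat" where
  "bd_jump_chain n \<omega> 0 = n"
| "bd_jump_chain n \<omega> (Suc k) = bd_step (bd_jump_chain n \<omega> k) (fst (\<omega> k))"

definition bd_space :: "real \<Rightarrow> real \<Rightarrow> (nat \<Rightarrow> bool \<times> real) measure" where
  "bd_space \<alpha> \<delta> = PiM UNIV (\<lambda>_. measure_pmf (bernoulli_pmf (\<alpha> / (\<alpha> + \<delta>)))
                                  \<Otimes>\<^sub>M density lborel (exponential_density 1))"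

definition bd_hitting_time :: "real \<Rightarrow> real \<Rightarrow> nat \<Rightarrow> (nat \<Rightarrow> bool \<times> real) \<Rightarrow> ennreal" where
  "bd_hitting_time \<alpha> \<delta> n \<omega> =
     (\<Sum>k. ennreal (if bd_jump_chain n \<omega> k \<noteq> 0
                     then snd (\<omega> k) / ((\<alpha> + \<delta>) * real (bd_jump_chain n \<omega> k)) else 0))"

definition bd_expected_hitting_time :: "real \<Rightarrow> real \<Rightarrow> nat \<Rightarrow> ennreal" where
  "bd_expected_hitting_time \<alpha> \<delta> n = (\<integral>\<^sup>+ \<omega>. bd_hitting_time \<alpha> \<delta> n \<omega> \<partial>bd_space \<alpha> \<delta>)"

end

theory Submission
  imports Defs "HOL-Analysis.Harmonic_Numbers"
begin

text \<open>Let \<open>h\<^sub>K(m)\<close> be the expected time the chain started in \<open>m\<close> spends in its first \<open>K\<close> sojourns.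
  Conditioning on the first step gives \<open>h\<^sub>K\<^sub>+\<^sub>1 = c + P h\<^sub>K\<close>, where \<open>c(m) = 1 / ((\<alpha> + \<delta>) m)\<close> is the
  mean holding time and \<open>P\<close> the transition operator of the jump chain, and \<open>E[T\<^sub>n] = sup\<^sub>K h\<^sub>K(n)\<close>
  by monotone convergence. Every nonnegative supersolution \<open>u \<ge> c + P u\<close> dominates all \<open>h\<^sub>K\<close>;
  \<open>u(m) = H\<^sub>m / (\<delta> - \<alpha>)\<close> is one, and \<open>H\<^sub>n \<le> 1 + ln n\<close>. A subsolution \<open>l \<le> c + P l\<close> satisfies
  \<open>l \<le> h\<^sub>K + P\<^sup>K l\<close>; for \<open>l(m) = ln (m + 1) / \<delta>\<close> the remainder vanishes as \<open>K \<rightarrow> \<infinity>\<close>, since \<open>l\<close>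
  grows at most linearly and is hence dominated by the weight \<open>r\<^sup>m\<close>, which \<open>P\<close> contracts by a
  factor below 1 whenever \<open>1 < r < \<delta> / \<alpha>\<close>.\<close>

lemma nn_integral_PiM_case_nat:
  assumes "prob_space M" and [measurable]: "f \<in> borel_measurable (PiM UNIV (\<lambda>_::nat. M))"
  shows "(\<integral>\<^sup>+\<omega>. f \<omega> \<partial>PiM UNIV (\<lambda>_::nat. M))
       = (\<integral>\<^sup>+x. \<integral>\<^sup>+\<omega>. f (case_nat x \<omega>) \<partial>PiM UNIV (\<lambda>_::nat. M) \<partial>M)"
proof -
  interpret S: sequence_space M
    using assms(1) by (simp add: sequence_space_def product_prob_space_def
        product_prob_space_axioms_def product_sigma_finite_def prob_space_imp_sigma_finite)
  have "(\<integral>\<^sup>+\<omega>. f \<omega> \<partial>S.S) = (\<integral>\<^sup>+(x, \<omega>). f (case_nat x \<omega>) \<partial>(M \<Otimes>\<^sub>M S.S))"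
    by (subst S.PiM_iter[symmetric]) (simp add: nn_integral_distr split_beta')
  also have "\<dots> = (\<integral>\<^sup>+x. \<integral>\<^sup>+\<omega>. f (case_nat x \<omega>) \<partial>S.S \<partial>M)"
    by (subst S.nn_integral_fst[symmetric]) simp_all
  finally show ?thesis .
qed

lemma nn_integral_exponential_density:
  assumes "0 < l"
  shows "(\<integral>\<^sup>+e. ennreal e \<partial>density lborel (exponential_density l)) = ennreal (1 / l)"
proof -
  have "(\<integral>\<^sup>+e. ennreal e \<partial>density lborel (exponential_density l))
      = (\<integral>\<^sup>+e. ennreal (exponential_density l e * e ^ 1) \<partial>lborel)"
    using assms by (subst nn_integral_density)
       (auto intro!: nn_integral_cong simp: ennreal_mult'[symmetric] exponential_density_def)
  also have "\<dots> = ennreal (1 / l)"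
    using assms by (subst nn_integral_erlang_ith_moment) auto
  finally show ?thesis .
qed

definition bd_step_distr :: "real \<Rightarrow> real \<Rightarrow> (bool \<times> real) measure" where
  "bd_step_distr \<alpha> \<delta> =
     measure_pmf (bernoulli_pmf (\<alpha> / (\<alpha> + \<delta>))) \<Otimes>\<^sub>M density lborel (exponential_density 1)"

lemma bd_space_eq: "bd_space \<alpha> \<delta> = PiM UNIV (\<lambda>_. bd_step_distr \<alpha> \<delta>)"
  by (simp add: bd_space_def bd_step_distr_def)

lemma prob_space_bd_step_distr: "prob_space (bd_step_distr \<alpha> \<delta>)"
proof -
  interpret D: prob_space "density lborel (exponential_density 1)"
    by (rule prob_space_exponential_density) simp
  interpret P: pair_prob_space "measure_pmf (bernoulli_pmf (\<alpha> / (\<alpha> + \<delta>)))"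
      "density lborel (exponential_density 1)"
    by unfold_locales
  show ?thesis unfolding bd_step_distr_def by (rule P.prob_space_axioms)
qed

definition bd_holding :: "real \<Rightarrow> real \<Rightarrow> nat \<Rightarrow> real \<Rightarrow> real" where
  "bd_holding \<alpha> \<delta> m e = (if m \<noteq> 0 then e / ((\<alpha> + \<delta>) * real m) else 0)"

definition bd_partial_time :: "real \<Rightarrow> real \<Rightarrow> nat \<Rightarrow> nat \<Rightarrow> (nat \<Rightarrow> bool \<times> real) \<Rightarrow> ennreal" where
  "bd_partial_time \<alpha> \<delta> K n \<omega> = (\<Sum>k<K. ennreal (bd_holding \<alpha> \<delta> (bd_jump_chain n \<omega> k) (snd (\<omega> k))))"

lemma measurable_bd_holding[measurable]: "(\<lambda>e. bd_holding \<alpha> \<delta> m e) \<in> borel_measurable borel"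
  unfolding bd_holding_def by measurable

lemma measurable_bd_jump_chain[measurable]:
  "(\<lambda>\<omega>. bd_jump_chain n \<omega> k) \<in> measurable (PiM UNIV (\<lambda>_::nat. bd_step_distr \<alpha> \<delta>)) (count_space UNIV)"
proof (induction k)
  case 0
  then show ?case by simp
next
  case (Suc k)
  have [measurable]: "(\<lambda>\<omega>. fst (\<omega> k)) \<in> measurable (PiM UNIV (\<lambda>_::nat. bd_step_distr \<alpha> \<delta>)) (count_space UNIV)"
    unfolding bd_step_distr_def by measurable
  show ?case using Suc by simp measurable
qed

lemma measurable_bd_partial_time[measurable]:
  "bd_partial_time \<alpha> \<delta> K n \<in> borel_measurable (PiM UNIV (\<lambda>_::nat. bd_step_distr \<alpha> \<delta>))"
proof -
  have [measurable]: "(\<lambda>\<omega>. snd (\<omega> k)) \<in> borel_measurable (PiM UNIV (\<lambda>_::nat. bd_step_distr \<alpha> \<delta>))" for k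
    unfolding bd_step_distr_def by measurable
  show ?thesis unfolding bd_partial_time_def bd_holding_def by measurable
qed

lemma bd_hitting_time_eq_SUP: "bd_hitting_time \<alpha> \<delta> n \<omega> = (SUP K. bd_partial_time \<alpha> \<delta> K n \<omega>)"
  unfolding bd_hitting_time_def bd_partial_time_def bd_holding_def by (rule suminf_eq_SUP)

lemma bd_jump_chain_case_nat:
  "bd_jump_chain n (case_nat x \<omega>) (Suc k) = bd_jump_chain (bd_step n (fst x)) \<omega> k"
  by (induction k) auto

lemma bd_partial_time_Suc_case_nat:
  "bd_partial_time \<alpha> \<delta> (Suc K) n (case_nat x \<omega>)
     = ennreal (bd_holding \<alpha> \<delta> n (snd x)) + bd_partial_time \<alpha> \<delta> K (bd_step n (fst x)) \<omega>"
  unfolding bd_partial_time_def sum.lessThan_Suc_shift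
  by (simp add: bd_jump_chain_case_nat del: bd_jump_chain.simps(2))

definition bd_kernel :: "real \<Rightarrow> real \<Rightarrow> (nat \<Rightarrow> real) \<Rightarrow> nat \<Rightarrow> real" where
  "bd_kernel \<alpha> \<delta> \<phi> m =
     \<alpha> / (\<alpha> + \<delta>) * \<phi> (bd_step m True) + \<delta> / (\<alpha> + \<delta>) * \<phi> (bd_step m False)"

text \<open>The Exp(1) variable enters the holding time linearly, so \<open>bd_holding \<alpha> \<delta> m 1\<close> is the mean
  holding time in state \<open>m\<close>.\<close>

primrec bd_expected_partial_time :: "real \<Rightarrow> real \<Rightarrow> nat \<Rightarrow> nat \<Rightarrow> real" where
  "bd_expected_partial_time \<alpha> \<delta> 0 = (\<lambda>_. 0)"
| "bd_expected_partial_time \<alpha> \<delta> (Suc K) =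
     (\<lambda>m. bd_holding \<alpha> \<delta> m 1 + bd_kernel \<alpha> \<delta> (bd_expected_partial_time \<alpha> \<delta> K) m)"

lemma bd_holding_nonneg: "0 \<le> \<alpha> + \<delta> \<Longrightarrow> 0 \<le> e \<Longrightarrow> 0 \<le> bd_holding \<alpha> \<delta> m e"
  by (simp add: bd_holding_def)

lemma bd_kernel_nonneg: "0 \<le> \<alpha> \<Longrightarrow> 0 \<le> \<delta> \<Longrightarrow> (\<And>m. 0 \<le> \<phi> m) \<Longrightarrow> 0 \<le> bd_kernel \<alpha> \<delta> \<phi> m"
  by (simp add: bd_kernel_def)

lemma bd_kernel_mono:
  assumes "0 \<le> \<alpha>" "0 \<le> \<delta>" "\<And>m. \<phi> m \<le> \<psi> m"
  shows "bd_kernel \<alpha> \<delta> \<phi> m \<le> bd_kernel \<alpha> \<delta> \<psi> m"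
  unfolding bd_kernel_def using assms by (intro add_mono mult_left_mono) auto

lemma bd_kernel_add: "bd_kernel \<alpha> \<delta> (\<lambda>m. \<phi> m + \<psi> m) m = bd_kernel \<alpha> \<delta> \<phi> m + bd_kernel \<alpha> \<delta> \<psi> m"
  by (simp add: bd_kernel_def algebra_simps)

lemma bd_kernel_cmult: "bd_kernel \<alpha> \<delta> (\<lambda>m. c * \<phi> m) m = c * bd_kernel \<alpha> \<delta> \<phi> m"
  by (simp add: bd_kernel_def algebra_simps)

lemma bd_kernel_funpow_nonneg:
  "0 \<le> \<alpha> \<Longrightarrow> 0 \<le> \<delta> \<Longrightarrow> (\<And>m. 0 \<le> \<phi> m) \<Longrightarrow> 0 \<le> (bd_kernel \<alpha> \<delta> ^^ K) \<phi> m"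
  by (induction K arbitrary: m) (simp_all add: bd_kernel_nonneg)

lemma bd_kernel_funpow_mono:
  "0 \<le> \<alpha> \<Longrightarrow> 0 \<le> \<delta> \<Longrightarrow> (\<And>m. \<phi> m \<le> \<psi> m) \<Longrightarrow>
     (bd_kernel \<alpha> \<delta> ^^ K) \<phi> m \<le> (bd_kernel \<alpha> \<delta> ^^ K) \<psi> m"
  by (induction K arbitrary: m) (simp_all add: bd_kernel_mono)

lemma bd_kernel_funpow_cmult:
  "(bd_kernel \<alpha> \<delta> ^^ K) (\<lambda>m. c * \<phi> m) = (\<lambda>m. c * (bd_kernel \<alpha> \<delta> ^^ K) \<phi> m)"
proof (induction K)
  case (Suc K)
  then show ?case by (simp add: bd_kernel_cmult)
qed simp

lemma bd_expected_partial_time_nonneg: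
  "0 \<le> \<alpha> \<Longrightarrow> 0 \<le> \<delta> \<Longrightarrow> 0 \<le> bd_expected_partial_time \<alpha> \<delta> K m"
  by (induction K arbitrary: m) (simp_all add: bd_holding_nonneg bd_kernel_nonneg)

lemma nn_integral_bd_holding:
  assumes \<alpha>: "0 < \<alpha>" and \<delta>: "0 < \<delta>"
  shows "(\<integral>\<^sup>+x. ennreal (bd_holding \<alpha> \<delta> m (snd x)) \<partial>bd_step_distr \<alpha> \<delta>) = ennreal (bd_holding \<alpha> \<delta> m 1)"
proof -
  let ?D = "density lborel (exponential_density 1)"
  interpret D: prob_space ?D
    by (rule prob_space_exponential_density) simp
  interpret P: pair_prob_space "measure_pmf (bernoulli_pmf (\<alpha> / (\<alpha> + \<delta>)))" ?D
    by unfold_locales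
  have c: "0 \<le> bd_holding \<alpha> \<delta> m 1"
    using \<alpha> \<delta> by (simp add: bd_holding_nonneg)
  have linear: "ennreal (bd_holding \<alpha> \<delta> m e) = ennreal (bd_holding \<alpha> \<delta> m 1) * ennreal e" for e
  proof -
    have "bd_holding \<alpha> \<delta> m e = bd_holding \<alpha> \<delta> m 1 * e"
      by (simp add: bd_holding_def)
    then show ?thesis by (simp only: ennreal_mult'[OF c])
  qed
  have "(\<integral>\<^sup>+x. ennreal (bd_holding \<alpha> \<delta> m (snd x)) \<partial>bd_step_distr \<alpha> \<delta>)
      = (\<integral>\<^sup>+e. ennreal (bd_holding \<alpha> \<delta> m e) \<partial>?D)"
    unfolding bd_step_distr_def by (subst P.nn_integral_snd[symmetric]) measurable
  also have "\<dots> = (\<integral>\<^sup>+e. ennreal (bd_holding \<alpha> \<delta> m 1) * ennreal e \<partial>?D)"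
    by (rule nn_integral_cong) (rule linear)
  also have "\<dots> = ennreal (bd_holding \<alpha> \<delta> m 1)"
    by (simp add: nn_integral_cmult nn_integral_exponential_density)
  finally show ?thesis .
qed

lemma nn_integral_bd_step:
  assumes \<alpha>: "0 < \<alpha>" and \<delta>: "0 < \<delta>" and \<phi>: "\<And>m. 0 \<le> \<phi> m"
  shows "(\<integral>\<^sup>+x. ennreal (\<phi> (bd_step m (fst x))) \<partial>bd_step_distr \<alpha> \<delta>) = ennreal (bd_kernel \<alpha> \<delta> \<phi> m)"
proof -
  let ?p = "\<alpha> / (\<alpha> + \<delta>)"
  let ?D = "density lborel (exponential_density 1)"
  interpret D: prob_space ?D
    by (rule prob_space_exponential_density) simp
  interpret P: pair_prob_space "measure_pmf (bernoulli_pmf ?p)" ?D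
    by unfold_locales
  have q: "1 - ?p = \<delta> / (\<alpha> + \<delta>)"
    using \<alpha> \<delta> by (simp add: field_simps)
  have "(\<integral>\<^sup>+x. ennreal (\<phi> (bd_step m (fst x))) \<partial>bd_step_distr \<alpha> \<delta>)
      = (\<integral>\<^sup>+b. ennreal (\<phi> (bd_step m b)) \<partial>bernoulli_pmf ?p)"
    unfolding bd_step_distr_def
    by (subst D.nn_integral_fst[symmetric]) (simp_all add: D.emeasure_space_1[simplified])
  also have "\<dots> = ennreal (bd_kernel \<alpha> \<delta> \<phi> m)"
    using \<alpha> \<delta> \<phi> by (simp add: bd_kernel_def q ennreal_plus[symmetric] ennreal_mult[symmetric]
        mult.commute del: ennreal_plus)
  finally show ?thesis .
qed

lemma nn_integral_bd_partial_time:
  assumes \<alpha>: "0 < \<alpha>" and \<delta>: "0 < \<delta>"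
  shows "(\<integral>\<^sup>+\<omega>. bd_partial_time \<alpha> \<delta> K n \<omega> \<partial>bd_space \<alpha> \<delta>) = ennreal (bd_expected_partial_time \<alpha> \<delta> K n)"
proof (induction K arbitrary: n)
  case 0
  then show ?case by (simp add: bd_partial_time_def)
next
  case (Suc K)
  let ?M = "bd_step_distr \<alpha> \<delta>"
  interpret S: prob_space "bd_space \<alpha> \<delta>"
    unfolding bd_space_eq by (intro prob_space_PiM prob_space_bd_step_distr)
  have "(\<integral>\<^sup>+\<omega>. bd_partial_time \<alpha> \<delta> (Suc K) n \<omega> \<partial>bd_space \<alpha> \<delta>)
      = (\<integral>\<^sup>+x. \<integral>\<^sup>+\<omega>. bd_partial_time \<alpha> \<delta> (Suc K) n (case_nat x \<omega>) \<partial>bd_space \<alpha> \<delta> \<partial>?M)"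
    unfolding bd_space_eq by (rule nn_integral_PiM_case_nat[OF prob_space_bd_step_distr]) measurable
  also have "\<dots> = (\<integral>\<^sup>+x. ennreal (bd_holding \<alpha> \<delta> n (snd x))
                      + ennreal (bd_expected_partial_time \<alpha> \<delta> K (bd_step n (fst x))) \<partial>?M)"
    unfolding bd_partial_time_Suc_case_nat
    by (intro nn_integral_cong, subst nn_integral_add)
       (simp_all add: bd_space_eq Suc.IH[unfolded bd_space_eq] S.emeasure_space_1[unfolded bd_space_eq])
  also have "\<dots> = (\<integral>\<^sup>+x. ennreal (bd_holding \<alpha> \<delta> n (snd x)) \<partial>?M)
                  + (\<integral>\<^sup>+x. ennreal (bd_expected_partial_time \<alpha> \<delta> K (bd_step n (fst x))) \<partial>?M)"
    by (rule nn_integral_add) (simp_all add: bd_step_distr_def)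
  also have "\<dots> = ennreal (bd_expected_partial_time \<alpha> \<delta> (Suc K) n)"
    using \<alpha> \<delta> by (simp add: nn_integral_bd_holding nn_integral_bd_step bd_expected_partial_time_nonneg
        bd_holding_nonneg bd_kernel_nonneg)
  finally show ?case .
qed

lemma bd_expected_hitting_time_eq_SUP:
  assumes "0 < \<alpha>" and "0 < \<delta>"
  shows "bd_expected_hitting_time \<alpha> \<delta> n = (SUP K. ennreal (bd_expected_partial_time \<alpha> \<delta> K n))"
proof -
  have "incseq (\<lambda>K. bd_partial_time \<alpha> \<delta> K n)"
    by (intro incseq_SucI le_funI) (simp add: bd_partial_time_def)
  then have "(\<integral>\<^sup>+\<omega>. (SUP K. bd_partial_time \<alpha> \<delta> K n \<omega>) \<partial>bd_space \<alpha> \<delta>)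
      = (SUP K. \<integral>\<^sup>+\<omega>. bd_partial_time \<alpha> \<delta> K n \<omega> \<partial>bd_space \<alpha> \<delta>)"
    unfolding bd_space_eq by (rule nn_integral_monotone_convergence_SUP) measurable
  then show ?thesis
    using assms by (simp add: bd_expected_hitting_time_def bd_hitting_time_eq_SUP nn_integral_bd_partial_time)
qed

lemma bd_expected_partial_time_le_supersolution:
  assumes "0 \<le> \<alpha>" "0 \<le> \<delta>" and nonneg: "\<And>m. 0 \<le> u m"
    and super: "\<And>m. bd_holding \<alpha> \<delta> m 1 + bd_kernel \<alpha> \<delta> u m \<le> u m"
  shows "bd_expected_partial_time \<alpha> \<delta> K m \<le> u m"
proof (induction K arbitrary: m)
  case 0
  show ?case using nonneg by simp
next
  case (Suc K)
  have "bd_kernel \<alpha> \<delta> (bd_expected_partial_time \<alpha> \<delta> K) m \<le> bd_kernel \<alpha> \<delta> u m"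
    using assms(1,2) Suc.IH by (rule bd_kernel_mono)
  then show ?case using super[of m] by simp
qed

lemma subsolution_le_bd_expected_partial_time:
  assumes "0 \<le> \<alpha>" "0 \<le> \<delta>" and sub: "\<And>m. l m \<le> bd_holding \<alpha> \<delta> m 1 + bd_kernel \<alpha> \<delta> l m"
  shows "l m \<le> bd_expected_partial_time \<alpha> \<delta> K m + (bd_kernel \<alpha> \<delta> ^^ K) l m"
proof (induction K arbitrary: m)
  case 0
  show ?case by simp
next
  case (Suc K)
  have "bd_kernel \<alpha> \<delta> l m
      \<le> bd_kernel \<alpha> \<delta> (\<lambda>m. bd_expected_partial_time \<alpha> \<delta> K m + (bd_kernel \<alpha> \<delta> ^^ K) l m) m"
    using assms(1,2) Suc.IH by (rule bd_kernel_mono)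
  also have "\<dots> = bd_kernel \<alpha> \<delta> (bd_expected_partial_time \<alpha> \<delta> K) m
                  + bd_kernel \<alpha> \<delta> ((bd_kernel \<alpha> \<delta> ^^ K) l) m"
    by (rule bd_kernel_add)
  finally show ?case using sub[of m] by simp
qed

definition geometric_weight :: "real \<Rightarrow> nat \<Rightarrow> real" where
  "geometric_weight r m = (if m = 0 then 0 else r ^ m)"

lemma real_le_geometric_weight:
  fixes r :: real
  assumes "1 < r"
  shows "(r - 1) * real m \<le> geometric_weight r m"
proof (cases "m = 0")
  case False
  have "1 + real m * (r - 1) \<le> (1 + (r - 1)) ^ m"
    using assms by (intro Bernoulli_inequality) simp
  then show ?thesis
    using False by (simp add: geometric_weight_def mult.commute)
qed (simp add: geometric_weight_def)

lemma bd_kernel_geometric_weight: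
  assumes "0 \<le> \<alpha>" "0 \<le> \<delta>" "0 < r"
  shows "bd_kernel \<alpha> \<delta> (geometric_weight r) m \<le> (\<alpha> * r + \<delta> / r) / (\<alpha> + \<delta>) * geometric_weight r m"
proof (cases m)
  case 0
  then show ?thesis by (simp add: bd_kernel_def bd_step_def geometric_weight_def)
next
  case (Suc j)
  have "geometric_weight r j \<le> r ^ j"
    using assms(3) by (simp add: geometric_weight_def)
  then have "bd_kernel \<alpha> \<delta> (geometric_weight r) m \<le> \<alpha> / (\<alpha> + \<delta>) * r ^ Suc m + \<delta> / (\<alpha> + \<delta>) * r ^ j"
    using Suc assms(1,2) by (simp add: bd_kernel_def bd_step_def geometric_weight_def mult_left_mono)
  also have "\<dots> = (\<alpha> * r ^ Suc m + \<delta> * r ^ j) / (\<alpha> + \<delta>)"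
    by (simp add: add_divide_distrib)
  also have "\<alpha> * r ^ Suc m + \<delta> * r ^ j = (\<alpha> * r + \<delta> / r) * r ^ m"
    using Suc assms(3) by (simp add: algebra_simps)
  also have "(\<alpha> * r + \<delta> / r) * r ^ m / (\<alpha> + \<delta>) = (\<alpha> * r + \<delta> / r) / (\<alpha> + \<delta>) * geometric_weight r m"
    using Suc by (simp add: geometric_weight_def)
  finally show ?thesis .
qed

lemma bd_kernel_funpow_geometric_weight:
  assumes "0 \<le> \<alpha>" "0 \<le> \<delta>" "0 < r"
  shows "(bd_kernel \<alpha> \<delta> ^^ K) (geometric_weight r) m
       \<le> ((\<alpha> * r + \<delta> / r) / (\<alpha> + \<delta>)) ^ K * geometric_weight r m"
proof (induction K arbitrary: m)
  case 0
  show ?case by simp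
next
  case (Suc K)
  let ?\<rho> = "(\<alpha> * r + \<delta> / r) / (\<alpha> + \<delta>)"
  have \<rho>: "0 \<le> ?\<rho>"
    using assms by simp
  have "(bd_kernel \<alpha> \<delta> ^^ Suc K) (geometric_weight r) m
      \<le> bd_kernel \<alpha> \<delta> (\<lambda>m. ?\<rho> ^ K * geometric_weight r m) m"
    using bd_kernel_mono[OF assms(1,2) Suc.IH] by simp
  also have "\<dots> = ?\<rho> ^ K * bd_kernel \<alpha> \<delta> (geometric_weight r) m"
    by (rule bd_kernel_cmult)
  also have "\<dots> \<le> ?\<rho> ^ K * (?\<rho> * geometric_weight r m)"
    using \<rho> by (intro mult_left_mono bd_kernel_geometric_weight assms) simp
  finally show ?case by (simp add: mult_ac)
qed

lemma geometric_contraction_lt_1: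
  fixes \<alpha> \<delta> r :: real
  assumes "0 < \<alpha>" "1 < r" "\<alpha> * r < \<delta>"
  shows "(\<alpha> * r + \<delta> / r) / (\<alpha> + \<delta>) < 1"
proof -
  have "0 < (r - 1) * (\<delta> - \<alpha> * r)"
    using assms by simp
  then have "\<alpha> * r * r + \<delta> < (\<alpha> + \<delta>) * r"
    by (simp add: algebra_simps)
  then have "\<alpha> * r + \<delta> / r < \<alpha> + \<delta>"
    using assms(2) by (simp add: field_simps)
  moreover have "0 < \<alpha> + \<delta>"
    using assms mult_pos_pos[of \<alpha> r] by linarith
  ultimately show ?thesis
    by simp
qed

lemma bd_kernel_funpow_tendsto_0:
  assumes \<alpha>: "0 < \<alpha>" and \<alpha>\<delta>: "\<alpha> < \<delta>"
    and nonneg: "\<And>m. 0 \<le> \<phi> m" and linear_growth: "\<And>m. \<phi> m \<le> C * real m"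
  shows "(\<lambda>K. (bd_kernel \<alpha> \<delta> ^^ K) \<phi> n) \<longlonglongrightarrow> 0"
proof -
  define r where "r = (\<alpha> + \<delta>) / (2 * \<alpha>)"
  define \<rho> where "\<rho> = (\<alpha> * r + \<delta> / r) / (\<alpha> + \<delta>)"
  have r: "1 < r" "\<alpha> * r < \<delta>"
    using \<alpha> \<alpha>\<delta> by (simp_all add: r_def field_simps)
  have \<rho>: "0 \<le> \<rho>" "\<rho> < 1"
    using \<alpha> \<alpha>\<delta> r geometric_contraction_lt_1[OF \<alpha> r] by (simp_all add: \<rho>_def)
  define B where "B = C / (r - 1)"
  have B: "0 \<le> B"
    using nonneg[of 1] linear_growth[of 1] r by (simp add: B_def)
  have \<phi>_le: "\<phi> m \<le> B * geometric_weight r m" for m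
  proof -
    have "\<phi> m \<le> B * ((r - 1) * real m)"
      using linear_growth[of m] r by (simp add: B_def)
    also have "\<dots> \<le> B * geometric_weight r m"
      using B r by (intro mult_left_mono real_le_geometric_weight) simp_all
    finally show ?thesis .
  qed
  have bound: "(bd_kernel \<alpha> \<delta> ^^ K) \<phi> n \<le> B * (\<rho> ^ K * geometric_weight r n)" for K
  proof -
    have "(bd_kernel \<alpha> \<delta> ^^ K) \<phi> n \<le> (bd_kernel \<alpha> \<delta> ^^ K) (\<lambda>m. B * geometric_weight r m) n"
      using \<alpha> \<alpha>\<delta> \<phi>_le by (intro bd_kernel_funpow_mono) auto
    also have "\<dots> = B * (bd_kernel \<alpha> \<delta> ^^ K) (geometric_weight r) n"
      by (simp add: bd_kernel_funpow_cmult)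
    also have "\<dots> \<le> B * (\<rho> ^ K * geometric_weight r n)"
      unfolding \<rho>_def using \<alpha> \<alpha>\<delta> r B
      by (intro mult_left_mono bd_kernel_funpow_geometric_weight) auto
    finally show ?thesis .
  qed
  have "(\<lambda>K. \<rho> ^ K) \<longlonglongrightarrow> 0"
    using \<rho> by (intro LIMSEQ_power_zero) simp
  then have "(\<lambda>K. B * (\<rho> ^ K * geometric_weight r n)) \<longlonglongrightarrow> 0"
    by (intro tendsto_mult_right_zero tendsto_mult_left_zero)
  then show ?thesis
  proof (rule tendsto_sandwich[OF _ _ tendsto_const, rotated 2])
    show "\<forall>\<^sub>F K in sequentially. 0 \<le> (bd_kernel \<alpha> \<delta> ^^ K) \<phi> n"
      using \<alpha> \<alpha>\<delta> nonneg by (intro always_eventually allI bd_kernel_funpow_nonneg) auto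
    show "\<forall>\<^sub>F K in sequentially. (bd_kernel \<alpha> \<delta> ^^ K) \<phi> n \<le> B * (\<rho> ^ K * geometric_weight r n)"
      using bound by (intro always_eventually allI)
  qed
qed

lemma bd_expected_hitting_time_le_supersolution:
  assumes "0 < \<alpha>" "0 < \<delta>" and "\<And>m. 0 \<le> u m"
    and "\<And>m. bd_holding \<alpha> \<delta> m 1 + bd_kernel \<alpha> \<delta> u m \<le> u m"
  shows "bd_expected_hitting_time \<alpha> \<delta> n \<le> ennreal (u n)"
  using assms
  by (simp add: bd_expected_hitting_time_eq_SUP SUP_least ennreal_leI
      bd_expected_partial_time_le_supersolution)

lemma bd_expected_hitting_time_ge_subsolution:
  assumes \<alpha>: "0 < \<alpha>" and \<alpha>\<delta>: "\<alpha> < \<delta>"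
    and nonneg: "\<And>m. 0 \<le> l m" and linear_growth: "\<And>m. l m \<le> C * real m"
    and sub: "\<And>m. l m \<le> bd_holding \<alpha> \<delta> m 1 + bd_kernel \<alpha> \<delta> l m"
  shows "ennreal (l n) \<le> bd_expected_hitting_time \<alpha> \<delta> n"
proof -
  have "(\<lambda>K. ennreal (l n - (bd_kernel \<alpha> \<delta> ^^ K) l n)) \<longlonglongrightarrow> ennreal (l n - 0)"
    using bd_kernel_funpow_tendsto_0[OF \<alpha> \<alpha>\<delta> nonneg linear_growth]
    by (intro tendsto_ennrealI tendsto_diff tendsto_const)
  moreover have "ennreal (l n - (bd_kernel \<alpha> \<delta> ^^ K) l n) \<le> bd_expected_hitting_time \<alpha> \<delta> n" for K
  proof -
    have "l n - (bd_kernel \<alpha> \<delta> ^^ K) l n \<le> bd_expected_partial_time \<alpha> \<delta> K n"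
      using subsolution_le_bd_expected_partial_time[of \<alpha> \<delta> l n K] \<alpha> \<alpha>\<delta> sub by simp
    then have "ennreal (l n - (bd_kernel \<alpha> \<delta> ^^ K) l n) \<le> ennreal (bd_expected_partial_time \<alpha> \<delta> K n)"
      by (rule ennreal_leI)
    also have "\<dots> \<le> bd_expected_hitting_time \<alpha> \<delta> n"
      using \<alpha> \<alpha>\<delta> by (subst bd_expected_hitting_time_eq_SUP) (auto intro: SUP_upper)
    finally show ?thesis .
  qed
  ultimately show ?thesis
    by (simp add: LIMSEQ_le_const2)
qed

lemma harm_supersolution:
  assumes \<alpha>: "0 < \<alpha>" and \<alpha>\<delta>: "\<alpha> < \<delta>"
  shows "bd_holding \<alpha> \<delta> m 1 + bd_kernel \<alpha> \<delta> (\<lambda>m. harm m / (\<delta> - \<alpha>)) m \<le> harm m / (\<delta> - \<alpha>)"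
proof (cases "m = 0")
  case True
  then show ?thesis by (simp add: bd_holding_def bd_kernel_def bd_step_def harm_expand(1))
next
  case False
  define u where "u = real m"
  define c where "c = 1 / ((\<alpha> + \<delta>) * (\<delta> - \<alpha>))"
  have u: "1 \<le> u"
    using False by (simp add: u_def)
  have c: "0 < c"
    using \<alpha> \<alpha>\<delta> by (simp add: c_def)
  have holding: "bd_holding \<alpha> \<delta> m 1 = 1 / ((\<alpha> + \<delta>) * u)"
    using False by (simp add: bd_holding_def u_def)
  have step: "bd_step m True = m + 1" "bd_step m False = m - 1"
    using False by (simp_all add: bd_step_def)
  have harm_next: "harm (m + 1) = harm m + 1 / (u + 1)"
    by (simp add: u_def harm_Suc inverse_eq_divide add_ac)
  have harm_prev: "harm (m - 1) = harm m - 1 / u"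
    using False by (cases m) (simp_all add: u_def harm_Suc inverse_eq_divide add_ac)
  have "bd_holding \<alpha> \<delta> m 1 + bd_kernel \<alpha> \<delta> (\<lambda>m. harm m / (\<delta> - \<alpha>)) m
      = 1 / ((\<alpha> + \<delta>) * u) + \<alpha> / (\<alpha> + \<delta>) * ((harm m + 1 / (u + 1)) / (\<delta> - \<alpha>))
        + \<delta> / (\<alpha> + \<delta>) * ((harm m - 1 / u) / (\<delta> - \<alpha>))"
    by (simp only: holding bd_kernel_def step harm_next harm_prev)
  also have "\<dots> = (\<delta> - \<alpha>) * c * (1 / u) + \<alpha> * c * (harm m + 1 / (u + 1)) + \<delta> * c * (harm m - 1 / u)"
    using \<alpha>\<delta> by (simp add: c_def)
  also have "\<dots> = (\<alpha> + \<delta>) * c * harm m - \<alpha> * c * (1 / u - 1 / (u + 1))"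
    by (simp add: algebra_simps)
  also have "\<dots> \<le> (\<alpha> + \<delta>) * c * harm m"
    using \<alpha> c u by (simp add: frac_le)
  also have "\<dots> = harm m / (\<delta> - \<alpha>)"
    using \<alpha> \<alpha>\<delta> by (simp add: c_def)
  finally show ?thesis .
qed

lemma harm_le_one_plus_ln:
  assumes "1 \<le> n"
  shows "harm n \<le> 1 + ln (real n)"
proof -
  obtain k where k: "n = Suc k"
    using assms by (cases n) auto
  have "harm (Suc k) - ln (real (Suc k)) \<le> harm (Suc 0) - ln (real (Suc 0))"
    using decseq_harm_diff_ln unfolding decseq_def by (metis zero_le)
  then show ?thesis
    using k by (simp add: harm_Suc harm_expand)
qed

lemma ln_subsolution:
  assumes \<alpha>: "0 < \<alpha>" and \<delta>: "0 < \<delta>"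
  shows "ln (real m + 1) / \<delta> \<le> bd_holding \<alpha> \<delta> m 1 + bd_kernel \<alpha> \<delta> (\<lambda>m. ln (real m + 1) / \<delta>) m"
proof (cases "m = 0")
  case True
  then show ?thesis by (simp add: bd_holding_def bd_kernel_def bd_step_def)
next
  case False
  define u where "u = real m"
  define c where "c = 1 / ((\<alpha> + \<delta>) * \<delta>)"
  have u: "1 \<le> u"
    using False by (simp add: u_def)
  have c: "0 < c"
    using \<alpha> \<delta> by (simp add: c_def)
  have holding: "bd_holding \<alpha> \<delta> m 1 = 1 / ((\<alpha> + \<delta>) * u)"
    using False by (simp add: bd_holding_def u_def)
  have step: "real (bd_step m True) + 1 = u + 2" "real (bd_step m False) + 1 = u"
    using False by (simp_all add: bd_step_def u_def of_nat_diff)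
  have "ln (real m + 1) / \<delta> = (\<alpha> + \<delta>) * c * ln (u + 1)"
    using \<alpha> \<delta> by (simp add: c_def u_def)
  also have "\<dots> = \<delta> * c * (1 / u) + \<alpha> * c * ln (u + 1) + \<delta> * c * (ln (u + 1) - 1 / u)"
    by (simp add: algebra_simps)
  also have "\<dots> \<le> \<delta> * c * (1 / u) + \<alpha> * c * ln (u + 2) + \<delta> * c * ln u"
    using \<alpha> \<delta> c u ln_diff_le_inverse[OF u] by (intro add_mono order_refl mult_left_mono) auto
  also have "\<dots> = 1 / ((\<alpha> + \<delta>) * u) + \<alpha> / (\<alpha> + \<delta>) * (ln (u + 2) / \<delta>)
        + \<delta> / (\<alpha> + \<delta>) * (ln u / \<delta>)"
    using \<delta> by (simp add: c_def)
  also have "\<dots> = bd_holding \<alpha> \<delta> m 1 + bd_kernel \<alpha> \<delta> (\<lambda>m. ln (real m + 1) / \<delta>) m"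
    by (simp only: holding bd_kernel_def step)
  finally show ?thesis .
qed

theorem claim5:
  fixes \<alpha> \<delta> :: real and n :: nat
  assumes "0 < \<alpha>" and "\<alpha> < \<delta>" and "1 \<le> n"
  shows "ennreal (ln (real n + 1) / \<delta>) \<le> bd_expected_hitting_time \<alpha> \<delta> n
       \<and> bd_expected_hitting_time \<alpha> \<delta> n \<le> ennreal ((1 + ln (real n)) / (\<delta> - \<alpha>))"
proof
  have \<delta>: "0 < \<delta>"
    using assms by simp
  show "ennreal (ln (real n + 1) / \<delta>) \<le> bd_expected_hitting_time \<alpha> \<delta> n"
  proof (rule bd_expected_hitting_time_ge_subsolution[where C = "1 / \<delta>"])
    show "ln (real m + 1) / \<delta> \<le> 1 / \<delta> * real m" for m
      using \<delta> ln_add_one_self_le_self[of "real m"] by (simp add: add.commute divide_right_mono)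
  qed (use assms \<delta> ln_subsolution in auto)
  have "bd_expected_hitting_time \<alpha> \<delta> n \<le> ennreal (harm n / (\<delta> - \<alpha>))"
    using assms \<delta> harm_supersolution
    by (intro bd_expected_hitting_time_le_supersolution) (auto simp: harm_nonneg)
  also have "\<dots> \<le> ennreal ((1 + ln (real n)) / (\<delta> - \<alpha>))"
    using assms harm_le_one_plus_ln by (intro ennreal_leI divide_right_mono) auto
  finally show "bd_expected_hitting_time \<alpha> \<delta> n \<le> ennreal ((1 + ln (real n)) / (\<delta> - \<alpha>))" .
qed

end
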